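(* Let $W=\langle s,t: s^2=t^2=(st)^m=1\rangle$ be a Coxeter group of rank $2$ with $S=\{s,t\}$, where $m\ge2$ is the order of $st$, and let $w_0$ be its longest element. Then $e_S=\operatorname{Av}(\langle w_0\rangle)-\operatorname{Av}(W)$.
   Context: For a subgroup $U$ of $W$, $\operatorname{Av}(U)=\frac1{|U|}\sum_{u\in U}u\in\mathbb CW$. Descent algebra data: for $J\subseteq S$, $X_J=\{w\in W:\ell(rw)>\ell(w)\ \forall r\in J\}$, $x_J=\sum_{x\in X_J}x^{-1}$, $X_J^\sharp=\{x\in X_J:x^{-1}Jx\subseteq S\}$; for $K,L\subseteq S$, $m_{KL}=|X_K\cap X_L^\sharp|$ if $L\subseteq K$ and $0$ otherwise; the matrix $(m_{KL})$ is invertible and the elements $e_L$ ($L\subseteq S$) are defined by $x_K=\sum_{L\subseteq S}m_{KL}e_L$ for all $K\subseteq S$. *)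

theory Defs
  imports Complex_Main
begin

text \<open>Concrete model of the rank 2 Coxeter group W = <s,t | s^2=t^2=(st)^m=1>
  (dihedral group of order 2m). The pair (k,b) with k < m encodes r^k s^b where r = st.\<close>

type_synonym dih = "nat \<times> bool"

definition dih_carrier :: "nat \<Rightarrow> dih set" where
  "dih_carrier m = {(k, b). k < m}"

definition dih_mult :: "nat \<Rightarrow> dih \<Rightarrow> dih \<Rightarrow> dih" where
  "dih_mult m x y = (case x of (a, e) \<Rightarrow> case y of (c, f) \<Rightarrow>
     ((a + (if e then m - c else c)) mod m, e \<noteq> f))"

definition dih_one :: dih where
  "dih_one = (0, False)"

definition dih_inv :: "nat \<Rightarrow> dih \<Rightarrow> dih" where
  "dih_inv m x = (case x of (a, e) \<Rightarrow> if e then (a, e) else ((m - a) mod m, False))"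

definition dih_pow :: "nat \<Rightarrow> dih \<Rightarrow> nat \<Rightarrow> dih" where
  "dih_pow m w k = (dih_mult m w ^^ k) dih_one"

text \<open>The Coxeter generators: s = (0,True), t = s r = (m-1,True), so that s t = r.\<close>
definition gen_s :: dih where "gen_s = (0, True)"
definition gen_t :: "nat \<Rightarrow> dih" where "gen_t m = (m - 1, True)"
definition dihS :: "nat \<Rightarrow> dih set" where "dihS m = {gen_s, gen_t m}"

definition prod_word :: "nat \<Rightarrow> dih list \<Rightarrow> dih" where
  "prod_word m ws = foldr (dih_mult m) ws dih_one"

definition len :: "nat \<Rightarrow> dih \<Rightarrow> nat" where
  "len m w = (LEAST n. \<exists>ws. set ws \<subseteq> dihS m \<and> length ws = n \<and> prod_word m ws = w)"

definition w0 :: "nat \<Rightarrow> dih" where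
  "w0 m = (THE w. w \<in> dih_carrier m \<and> (\<forall>v \<in> dih_carrier m. len m v \<le> len m w))"

definition cyc :: "nat \<Rightarrow> dih \<Rightarrow> dih set" where
  "cyc m w = {dih_pow m w k | k. True}"

text \<open>Group algebra CW: functions W \<Rightarrow> complex (coefficients).\<close>
definition delta :: "dih \<Rightarrow> dih \<Rightarrow> complex" where
  "delta w = (\<lambda>g. if g = w then 1 else 0)"

definition Av :: "dih set \<Rightarrow> dih \<Rightarrow> complex" where
  "Av U = (\<lambda>g. (1 / of_nat (card U)) * (\<Sum>u\<in>U. delta u g))"

definition XJ :: "nat \<Rightarrow> dih set \<Rightarrow> dih set" where
  "XJ m J = {w \<in> dih_carrier m. \<forall>r\<in>J. len m (dih_mult m r w) > len m w}"

definition xJ :: "nat \<Rightarrow> dih set \<Rightarrow> dih \<Rightarrow> complex" where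
  "xJ m J = (\<lambda>g. \<Sum>x\<in>XJ m J. delta (dih_inv m x) g)"

definition XJ_sharp :: "nat \<Rightarrow> dih set \<Rightarrow> dih set" where
  "XJ_sharp m J = {x \<in> XJ m J.
     (\<lambda>j. dih_mult m (dih_mult m (dih_inv m x) j) x) ` J \<subseteq> dihS m}"

definition mKL :: "nat \<Rightarrow> dih set \<Rightarrow> dih set \<Rightarrow> nat" where
  "mKL m K L = (if L \<subseteq> K then card (XJ m K \<inter> XJ_sharp m L) else 0)"

end

theory Submission
  imports Defs
begin

text \<open>The Coxeter length of every element is explicit, which shows that the identity has no
  left descent, the longest element w0 has both s and t as left descents, and every other
  element has exactly one. Hence X_{s} \<union> X_{t} = W - {w0}, X_{s} \<inter> X_{t} = X_S = {1}, and
  X_{r} \<inter> X_{r}^\<sharp> has two elements for r = s, t. The matrix (m_KL) is therefore triangular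
  with diagonal 2m, 2, 2, 1, and solving for e_S gives
  e_S = x_S - (x_{s} + x_{t})/2 + (m - 1) x_{}/(2m). Substituting x_{} = \<Sum>W,
  x_{s} + x_{t} = \<Sum>W - w0 + 1 and x_S = 1 yields e_S = (1 + w0)/2 - \<Sum>W/(2m).\<close>

lemma mod_less_double: "x < 2 * m \<Longrightarrow> x mod (m::nat) = (if x < m then x else x - m)"
  by (metis le_mod_geq less_diff_conv2 mod_less mult_2 not_less)

lemma dih_mult_eq:
  "a < m \<Longrightarrow> c < m \<Longrightarrow> dih_mult m (a, e) (c, f) =
     ((if e then (if c = 0 then a else if c \<le> a then a - c else a + m - c)
       else (if a + c < m then a + c else a + c - m)), e \<noteq> f)"
  unfolding dih_mult_def by (auto simp: mod_less_double)

lemma dih_inv_eq: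
  "a < m \<Longrightarrow> dih_inv m (a, e) = (if e then (a, e) else (if a = 0 then 0 else m - a, False))"
  unfolding dih_inv_def by auto

lemma dih_carrier_iff [simp]: "(k, b) \<in> dih_carrier m \<longleftrightarrow> k < m"
  by (simp add: dih_carrier_def)

lemma dih_carrier_eq: "dih_carrier m = {..<m} \<times> UNIV"
  by (auto simp: dih_carrier_def)

lemma finite_dih_carrier: "finite (dih_carrier m)"
  by (simp add: dih_carrier_eq)

lemma card_dih_carrier: "card (dih_carrier m) = 2 * m"
  by (simp add: dih_carrier_eq card_cartesian_product)

lemma dih_mult_closed: "0 < m \<Longrightarrow> dih_mult m x y \<in> dih_carrier m"
  unfolding dih_mult_def dih_carrier_def by (auto split: prod.splits)

lemma dih_inv_closed: "g \<in> dih_carrier m \<Longrightarrow> dih_inv m g \<in> dih_carrier m"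
  by (cases g) (auto simp: dih_inv_eq)

lemma dih_inv_inv: "g \<in> dih_carrier m \<Longrightarrow> dih_inv m (dih_inv m g) = g"
  by (cases g) (auto simp: dih_inv_eq)

lemma dih_one_in_carrier: "0 < m \<Longrightarrow> dih_one \<in> dih_carrier m"
  by (simp add: dih_one_def)

lemma gen_s_mult: "k < m \<Longrightarrow> dih_mult m gen_s (k, b) = (if k = 0 then 0 else m - k, \<not> b)"
  unfolding gen_s_def by (subst dih_mult_eq) auto

lemma gen_t_mult: "k < m \<Longrightarrow> dih_mult m (gen_t m) (k, b) = (m - 1 - k, \<not> b)"
  unfolding gen_t_def by (subst dih_mult_eq) auto

lemma gen_s_neq_gen_t: "2 \<le> m \<Longrightarrow> gen_s \<noteq> gen_t m"
  by (simp add: gen_s_def gen_t_def)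

text \<open>\<open>(k, False)\<close> encodes \<open>(st)^k = (ts)^(m-k)\<close> and \<open>(k, True)\<close> encodes
  \<open>(st)^k s = (ts)^(m-k-1) t\<close>; the shorter of the two alternating words is reduced.\<close>
definition reduced_len :: "nat \<Rightarrow> dih \<Rightarrow> nat" where
  "reduced_len m w = (case w of (k, b) \<Rightarrow>
     if b then min (2 * k + 1) (2 * (m - k) - 1) else 2 * min k (m - k))"

definition desc_s :: "nat \<Rightarrow> dih \<Rightarrow> bool" where
  "desc_s m w = (case w of (k, b) \<Rightarrow> if b then 2 * k < m else 0 < k \<and> 2 * k \<le> m)"

definition desc_t :: "nat \<Rightarrow> dih \<Rightarrow> bool" where
  "desc_t m w = (case w of (k, b) \<Rightarrow> if b then m \<le> 2 * k + 1 else m \<le> 2 * k)"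

lemma reduced_len_gen_s_mult:
  "k < m \<Longrightarrow> reduced_len m (dih_mult m gen_s (k, b)) =
     (if desc_s m (k, b) then reduced_len m (k, b) - 1 else reduced_len m (k, b) + 1)"
  by (simp add: gen_s_mult reduced_len_def desc_s_def)

lemma reduced_len_gen_t_mult:
  "k < m \<Longrightarrow> reduced_len m (dih_mult m (gen_t m) (k, b)) =
     (if desc_t m (k, b) then reduced_len m (k, b) - 1 else reduced_len m (k, b) + 1)"
  by (simp add: gen_t_mult reduced_len_def desc_t_def; arith)

lemma reduced_len_eq_0_iff: "k < m \<Longrightarrow> reduced_len m (k, b) = 0 \<longleftrightarrow> (k, b) = dih_one"
  by (auto simp: reduced_len_def dih_one_def split: if_splits)

lemma desc_exists: "k < m \<Longrightarrow> 0 < reduced_len m (k, b) \<Longrightarrow> desc_s m (k, b) \<or> desc_t m (k, b)"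
  by (auto simp: reduced_len_def desc_s_def desc_t_def split: if_splits)

lemma reduced_len_gen_mult_le:
  assumes "r \<in> dihS m" "w \<in> dih_carrier m"
  shows "reduced_len m (dih_mult m r w) \<le> reduced_len m w + 1"
  using assms by (cases w) (auto simp: dihS_def reduced_len_gen_s_mult reduced_len_gen_t_mult)

lemma reduced_len_prod_word_le:
  assumes "2 \<le> m" "set ws \<subseteq> dihS m"
  shows "prod_word m ws \<in> dih_carrier m \<and> reduced_len m (prod_word m ws) \<le> length ws"
  using assms(2)
proof (induction ws)
  case Nil
  then show ?case using assms(1) by (simp add: prod_word_def dih_one_def reduced_len_def)
next
  case (Cons r ws)
  then show ?case
    using assms(1) reduced_len_gen_mult_le[of r m "prod_word m ws"] dih_mult_closed[of m]
    by (simp add: prod_word_def)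
qed

lemma reduced_word_exists:
  assumes "2 \<le> m" "w \<in> dih_carrier m"
  shows "\<exists>ws. set ws \<subseteq> dihS m \<and> length ws = reduced_len m w \<and> prod_word m ws = w"
  using assms(2)
proof (induction "reduced_len m w" arbitrary: w rule: less_induct)
  case less
  obtain k b where w: "w = (k, b)" and k: "k < m"
    using less.prems by (cases w) auto
  show ?case
  proof (cases "reduced_len m w = 0")
    case True
    then have "w = dih_one" using reduced_len_eq_0_iff[OF k] w by simp
    with True show ?thesis by (intro exI[of _ "[]"]) (simp add: prod_word_def)
  next
    case False
    obtain r where r: "r \<in> dihS m" "reduced_len m (dih_mult m r w) + 1 = reduced_len m w"
      "dih_mult m r (dih_mult m r w) = w"
    proof (cases "desc_s m w")
      case True
      then show ?thesis using that[of gen_s] k w False reduced_len_gen_s_mult[OF k, of b]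
        by (auto simp: dihS_def gen_s_mult)
    next
      assume "\<not> desc_s m w"
      then have "desc_t m w" using desc_exists[OF k] False w by auto
      then show ?thesis using that[of "gen_t m"] k w False reduced_len_gen_t_mult[OF k, of b]
        by (auto simp: dihS_def gen_t_mult)
    qed
    moreover have "dih_mult m r w \<in> dih_carrier m" using dih_mult_closed assms(1) by simp
    ultimately obtain ws where "set ws \<subseteq> dihS m" "length ws = reduced_len m (dih_mult m r w)"
        "prod_word m ws = dih_mult m r w"
      using less.hyps[of "dih_mult m r w"] by auto
    with r show ?thesis by (intro exI[of _ "r # ws"]) (simp add: prod_word_def)
  qed
qed

lemma len_eq_reduced_len: "2 \<le> m \<Longrightarrow> w \<in> dih_carrier m \<Longrightarrow> len m w = reduced_len m w"
  unfolding len_def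
  by (rule Least_equality) (use reduced_word_exists reduced_len_prod_word_le in blast)+

lemma len_gen_s_mult_gt_iff:
  "2 \<le> m \<Longrightarrow> k < m \<Longrightarrow> len m (dih_mult m gen_s (k, b)) > len m (k, b) \<longleftrightarrow> \<not> desc_s m (k, b)"
  using len_eq_reduced_len[of m "dih_mult m gen_s (k, b)"] reduced_len_gen_s_mult[of k m b]
    dih_mult_closed[of m] by (auto simp: len_eq_reduced_len)

lemma len_gen_t_mult_gt_iff:
  "2 \<le> m \<Longrightarrow> k < m \<Longrightarrow> len m (dih_mult m (gen_t m) (k, b)) > len m (k, b) \<longleftrightarrow> \<not> desc_t m (k, b)"
  using len_eq_reduced_len[of m "dih_mult m (gen_t m) (k, b)"] reduced_len_gen_t_mult[of k m b]
    dih_mult_closed[of m] by (auto simp: len_eq_reduced_len)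

lemma XJ_iff:
  assumes "2 \<le> m" "J \<subseteq> dihS m"
  shows "(k, b) \<in> XJ m J \<longleftrightarrow>
    k < m \<and> (gen_s \<in> J \<longrightarrow> \<not> desc_s m (k, b)) \<and> (gen_t m \<in> J \<longrightarrow> \<not> desc_t m (k, b))"
proof -
  have "(\<forall>r\<in>J. P r) \<longleftrightarrow> (gen_s \<in> J \<longrightarrow> P gen_s) \<and> (gen_t m \<in> J \<longrightarrow> P (gen_t m))" for P
    using assms(2) by (auto simp: dihS_def)
  then show ?thesis
    using len_gen_s_mult_gt_iff[OF assms(1)] len_gen_t_mult_gt_iff[OF assms(1)]
    by (auto simp: XJ_def)
qed

lemma XJ_empty: "XJ m {} = dih_carrier m"
  by (simp add: XJ_def)

lemma XJ_Un: "XJ m (A \<union> B) = XJ m A \<inter> XJ m B"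
  by (auto simp: XJ_def)

lemma XJ_subset_carrier: "XJ m J \<subseteq> dih_carrier m"
  by (auto simp: XJ_def)

lemma XJ_dihS: "2 \<le> m \<Longrightarrow> XJ m (dihS m) = {dih_one}"
  by (auto simp: XJ_iff dihS_def desc_s_def desc_t_def dih_one_def split: if_splits)

definition longest_elt :: "nat \<Rightarrow> dih" where
  "longest_elt m = (m div 2, odd m)"

lemma longest_elt_in_carrier: "2 \<le> m \<Longrightarrow> longest_elt m \<in> dih_carrier m"
  by (simp add: longest_elt_def)

lemma longest_elt_neq_one: "2 \<le> m \<Longrightarrow> longest_elt m \<noteq> dih_one"
  by (simp add: longest_elt_def dih_one_def)

lemma reduced_len_le: "k < m \<Longrightarrow> reduced_len m (k, b) \<le> m"
  by (auto simp: reduced_len_def)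

lemma reduced_len_eq_iff: "k < m \<Longrightarrow> reduced_len m (k, b) = m \<longleftrightarrow> (k, b) = longest_elt m"
proof -
  assume "k < m"
  moreover obtain n where "m = 2 * n \<or> m = 2 * n + 1" by (metis oddE evenE)
  ultimately show ?thesis by (auto simp: reduced_len_def longest_elt_def) presburger+
qed

lemma w0_eq_longest_elt:
  assumes m: "2 \<le> m"
  shows "w0 m = longest_elt m"
proof -
  have len_max: "len m w \<le> m" and len_max_iff: "len m w = m \<longleftrightarrow> w = longest_elt m"
    if "w \<in> dih_carrier m" for w
    using that len_eq_reduced_len[OF m that] reduced_len_le reduced_len_eq_iff by (cases w; auto)+
  show ?thesis
    unfolding w0_def
    using longest_elt_in_carrier[OF m] len_max len_max_iff
    by (intro the_equality) (metis le_antisym)+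
qed

lemma longest_elt_squared: "2 \<le> m \<Longrightarrow> dih_mult m (longest_elt m) (longest_elt m) = dih_one"
proof -
  assume "2 \<le> m"
  moreover obtain n where "m = 2 * n \<or> m = 2 * n + 1" by (metis oddE evenE)
  ultimately show ?thesis by (auto simp: longest_elt_def dih_mult_eq dih_one_def)
qed

lemma dih_pow_longest_elt:
  "2 \<le> m \<Longrightarrow> dih_pow m (longest_elt m) k = (if even k then dih_one else longest_elt m)"
  unfolding dih_pow_def
  by (induction k) (auto simp: longest_elt_squared longest_elt_def dih_mult_eq dih_one_def)

lemma cyc_w0: "2 \<le> m \<Longrightarrow> cyc m (w0 m) = {dih_one, longest_elt m}"
  unfolding cyc_def w0_eq_longest_elt
  by (auto simp: dih_pow_longest_elt) (metis odd_one even_zero)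

lemma desc_s_and_desc_t_iff:
  "k < m \<Longrightarrow> desc_s m (k, b) \<and> desc_t m (k, b) \<longleftrightarrow> (k, b) = longest_elt m"
proof -
  assume "k < m"
  moreover obtain n where "m = 2 * n \<or> m = 2 * n + 1" by (metis oddE evenE)
  ultimately show ?thesis by (auto simp: desc_s_def desc_t_def longest_elt_def) presburger
qed

lemma XJ_gen_s_Un_XJ_gen_t:
  assumes m: "2 \<le> m"
  shows "XJ m {gen_s} \<union> XJ m {gen_t m} = dih_carrier m - {longest_elt m}"
proof (intro set_eqI)
  fix x :: dih
  obtain k b where x: "x = (k, b)" by (cases x)
  have "{gen_s} \<subseteq> dihS m" "{gen_t m} \<subseteq> dihS m" by (auto simp: dihS_def)
  then show "x \<in> XJ m {gen_s} \<union> XJ m {gen_t m} \<longleftrightarrow> x \<in> dih_carrier m - {longest_elt m}"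
    unfolding x using XJ_iff[OF m] gen_s_neq_gen_t[OF m] desc_s_and_desc_t_iff[of k m b]
    by auto
qed

lemma XJ_gen_s_Int_XJ_gen_t:
  assumes m: "2 \<le> m"
  shows "XJ m {gen_s} \<inter> XJ m {gen_t m} = {dih_one}"
proof -
  have "{gen_s} \<union> {gen_t m} = dihS m" by (auto simp: dihS_def)
  then show ?thesis using XJ_dihS[OF m] XJ_Un[of m "{gen_s}" "{gen_t m}"] by simp
qed

lemma card_XJ_gen_s_plus_card_XJ_gen_t:
  assumes m: "2 \<le> m"
  shows "card (XJ m {gen_s}) + card (XJ m {gen_t m}) = 2 * m"
proof -
  have fin: "finite (XJ m J)" for J
    using finite_subset[OF XJ_subset_carrier finite_dih_carrier] .
  have "card (XJ m {gen_s}) + card (XJ m {gen_t m}) =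
      card (XJ m {gen_s} \<union> XJ m {gen_t m}) + card (XJ m {gen_s} \<inter> XJ m {gen_t m})"
    by (rule card_Un_Int[OF fin fin])
  also have "\<dots> = card (dih_carrier m - {longest_elt m}) + 1"
    by (simp only: XJ_gen_s_Int_XJ_gen_t[OF m] XJ_gen_s_Un_XJ_gen_t[OF m]) simp
  also have "\<dots> = 2 * m"
    using longest_elt_in_carrier[OF m] m
    by (simp add: card_Diff_singleton finite_dih_carrier card_dih_carrier)
  finally show ?thesis .
qed

lemma conj_gen_s:
  "k < m \<Longrightarrow> dih_mult m (dih_mult m (dih_inv m (k, b)) gen_s) (k, b) =
    (if b then (if 2 * k < m then 2 * k else 2 * k - m)
     else (if k = 0 then 0 else if 2 * k \<le> m then m - 2 * k else 2 * m - 2 * k), True)"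
  unfolding gen_s_def by (auto simp: dih_inv_eq dih_mult_eq)

lemma conj_gen_t:
  "k < m \<Longrightarrow> dih_mult m (dih_mult m (dih_inv m (k, b)) (gen_t m)) (k, b) =
    (if b then (if 2 * k + 1 < m then 2 * k + 1 else 2 * k + 1 - m)
     else (if 2 * k + 1 \<le> m then m - 2 * k - 1 else 2 * m - 2 * k - 1), True)"
  unfolding gen_t_def by (auto simp: dih_inv_eq dih_mult_eq)

lemma XJ_sharp_gen_s:
  assumes m: "2 \<le> m"
  shows "XJ m {gen_s} \<inter> XJ_sharp m {gen_s} =
    {dih_one, if odd m then ((m + 1) div 2, False) else (m div 2, True)}"
proof (intro set_eqI)
  fix x :: dih
  obtain k b where x: "x = (k, b)" by (cases x)
  obtain n where n: "m = 2 * n \<or> m = 2 * n + 1" by (metis oddE evenE)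
  have "2 * k \<noteq> 2 * n + 1" by presburger
  moreover have "{gen_s} \<subseteq> dihS m" by (simp add: dihS_def)
  ultimately show "x \<in> XJ m {gen_s} \<inter> XJ_sharp m {gen_s} \<longleftrightarrow>
      x \<in> {dih_one, if odd m then ((m + 1) div 2, False) else (m div 2, True)}"
    unfolding XJ_sharp_def x using XJ_iff[OF m] gen_s_neq_gen_t[OF m] conj_gen_s[of k m b] n m
    by (cases b) (auto simp: dihS_def gen_s_def gen_t_def desc_s_def dih_one_def)
qed

lemma XJ_sharp_gen_t:
  assumes m: "2 \<le> m"
  shows "XJ m {gen_t m} \<inter> XJ_sharp m {gen_t m} =
    {dih_one, if odd m then ((m - 1) div 2, False) else ((m - 2) div 2, True)}"
proof (intro set_eqI)
  fix x :: dih
  obtain k b where x: "x = (k, b)" by (cases x)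
  obtain n where n: "m = 2 * n \<or> m = 2 * n + 1" by (metis oddE evenE)
  have "2 * k + 1 \<noteq> 2 * n" by presburger
  moreover have "{gen_t m} \<subseteq> dihS m" by (simp add: dihS_def)
  ultimately show "x \<in> XJ m {gen_t m} \<inter> XJ_sharp m {gen_t m} \<longleftrightarrow>
      x \<in> {dih_one, if odd m then ((m - 1) div 2, False) else ((m - 2) div 2, True)}"
    unfolding XJ_sharp_def x using XJ_iff[OF m] gen_s_neq_gen_t[OF m] conj_gen_t[of k m b] n m
    by (cases b) (auto simp: dihS_def gen_s_def gen_t_def desc_t_def dih_one_def)
qed

lemma card_XJ_sharp_gen:
  assumes "2 \<le> m" "r \<in> dihS m"
  shows "card (XJ m {r} \<inter> XJ_sharp m {r}) = 2"
proof -
  have "odd m \<Longrightarrow> (m - 1) div 2 \<noteq> 0" using assms(1) by presburger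
  then show ?thesis
    using assms XJ_sharp_gen_s[OF assms(1)] XJ_sharp_gen_t[OF assms(1)]
    by (auto simp: dihS_def dih_one_def)
qed

lemma dih_one_in_XJ_sharp:
  assumes m: "2 \<le> m" and L: "L \<subseteq> dihS m"
  shows "dih_one \<in> XJ_sharp m L"
proof -
  have "dih_one \<in> XJ m L"
    using XJ_iff[OF m L, of 0 False] m by (simp add: dih_one_def desc_s_def desc_t_def)
  moreover have "dih_mult m (dih_mult m (dih_inv m dih_one) j) dih_one = j" if "j \<in> dihS m" for j
    using that m by (auto simp: dihS_def gen_s_def gen_t_def dih_one_def dih_inv_eq dih_mult_eq)
  ultimately show ?thesis using L by (auto simp: XJ_sharp_def)
qed

lemma mKL_eq_0_if_not_subset: "\<not> L \<subseteq> K \<Longrightarrow> mKL m K L = 0"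
  by (simp add: mKL_def)

lemma mKL_empty: "mKL m {} L = (if L = {} then 2 * m else 0)"
  by (simp add: mKL_def XJ_empty XJ_sharp_def card_dih_carrier)

lemma mKL_singleton_empty: "mKL m {r} {} = card (XJ m {r})"
  by (simp add: mKL_def XJ_sharp_def XJ_empty Int_absorb2 XJ_subset_carrier)

lemma mKL_singleton_self: "2 \<le> m \<Longrightarrow> r \<in> dihS m \<Longrightarrow> mKL m {r} {r} = 2"
  by (simp add: mKL_def card_XJ_sharp_gen)

lemma mKL_dihS: "2 \<le> m \<Longrightarrow> L \<subseteq> dihS m \<Longrightarrow> mKL m (dihS m) L = 1"
  using XJ_dihS dih_one_in_XJ_sharp by (simp add: mKL_def)

lemma xJ_eq_indicator:
  "xJ m J g = (if g \<in> dih_carrier m \<and> dih_inv m g \<in> XJ m J then 1 else 0)"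
proof -
  have "xJ m J g = (\<Sum>x\<in>XJ m J. if x = dih_inv m g \<and> g \<in> dih_carrier m then 1 else 0)"
    unfolding xJ_def delta_def
    using XJ_subset_carrier dih_inv_closed dih_inv_inv by (intro sum.cong) (metis subsetD)+
  then show ?thesis
    using finite_subset[OF XJ_subset_carrier finite_dih_carrier]
    by (cases "g \<in> dih_carrier m") simp_all
qed

lemma xJ_empty: "xJ m {} g = (if g \<in> dih_carrier m then 1 else 0)"
  using dih_inv_closed by (simp add: xJ_eq_indicator XJ_empty)

lemma xJ_dihS: "2 \<le> m \<Longrightarrow> xJ m (dihS m) g = (if g = dih_one then 1 else 0)"
  using dih_inv_inv[of g m] by (auto simp: xJ_eq_indicator XJ_dihS dih_one_def dih_inv_eq)

lemma xJ_gen_s_plus_xJ_gen_t: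
  assumes m: "2 \<le> m"
  shows "xJ m {gen_s} g + xJ m {gen_t m} g =
    (if g \<in> dih_carrier m - {longest_elt m} then 1 else 0) + (if g = dih_one then 1 else 0)"
proof -
  let ?A = "XJ m {gen_s}" and ?B = "XJ m {gen_t m}"
  have inv_longest: "dih_inv m (longest_elt m) = longest_elt m"
    unfolding longest_elt_def dih_inv_def using m by (cases "odd m") (auto elim!: evenE)
  have inv_one: "dih_inv m dih_one = dih_one"
    by (simp add: dih_one_def dih_inv_def)
  have inv_eq_iff: "dih_inv m g = h \<longleftrightarrow> g = h"
    if "g \<in> dih_carrier m" "dih_inv m h = h" for h
    using dih_inv_inv[OF that(1)] that(2) by metis
  have "xJ m {gen_s} g + xJ m {gen_t m} g =
      (if g \<in> dih_carrier m \<and> dih_inv m g \<in> ?A \<union> ?B then 1 else 0)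
      + (if g \<in> dih_carrier m \<and> dih_inv m g \<in> ?A \<inter> ?B then 1 else 0)"
    unfolding xJ_eq_indicator by auto
  also have "\<dots> = (if g \<in> dih_carrier m - {longest_elt m} then 1 else 0)
      + (if g = dih_one then 1 else 0)"
    unfolding XJ_gen_s_Un_XJ_gen_t[OF m] XJ_gen_s_Int_XJ_gen_t[OF m]
    using dih_inv_closed[of g m] inv_eq_iff[OF _ inv_longest] inv_eq_iff[OF _ inv_one]
      dih_one_in_carrier[of m] m
    by (cases "g \<in> dih_carrier m") auto
  finally show ?thesis .
qed

lemma Av_eq: "finite A \<Longrightarrow> Av A g = (if g \<in> A then 1 / of_nat (card A) else 0)"
  by (simp add: Av_def delta_def)

lemma sum_Pow_doubleton:
  "a \<noteq> b \<Longrightarrow> (\<Sum>L\<in>Pow {a, b}. f L) = f {} + f {a} + f {b} + (f {a, b} :: 'c::comm_monoid_add)"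
proof -
  assume "a \<noteq> b"
  moreover have "Pow {a, b} = {{}, {a}, {b}, {a, b}}" by blast
  ultimately show ?thesis by (simp add: insert_commute add.assoc)
qed

lemma rank2_system_solution:
  fixes x0 xs xt xst e0 es et est :: "'a::field_char_0"
  assumes "x0 = of_nat (2 * m) * e0"
    and "xs = of_nat a * e0 + 2 * es" and "xt = of_nat b * e0 + 2 * et"
    and "xst = e0 + es + et + est"
    and "a + b = 2 * m" and "0 < m"
  shows "est = xst - (xs + xt) / 2 + (of_nat m - 1) * x0 / (2 * of_nat m)"
proof -
  have "of_nat a * e0 + of_nat b * e0 = of_nat (2 * m) * e0"
    by (metis assms(5) distrib_right of_nat_add)
  then have "xs + xt = 2 * of_nat m * e0 + 2 * (es + et)"
    using assms(2,3) by (simp add: algebra_simps)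
  with assms(1,4,6) show ?thesis by (simp add: field_simps)
qed

lemma e_dihS_eq_xJ_combination:
  fixes e :: "dih set \<Rightarrow> dih \<Rightarrow> complex"
  assumes m: "2 \<le> m"
    and x_eq: "\<forall>K. K \<subseteq> dihS m \<longrightarrow>
           (\<forall>g. xJ m K g = (\<Sum>L\<in>Pow (dihS m). of_nat (mKL m K L) * e L g))"
  shows "e (dihS m) g = xJ m (dihS m) g - (xJ m {gen_s} g + xJ m {gen_t m} g) / 2
      + (of_nat m - 1) * xJ m {} g / (2 * of_nat m)"
proof -
  let ?s = gen_s and ?t = "gen_t m"
  have st: "?s \<noteq> ?t" and S: "dihS m = {?s, ?t}"
    using gen_s_neq_gen_t[OF m] by (simp_all add: dihS_def)
  have xJ_expand: "xJ m K g = of_nat (mKL m K {}) * e {} g + of_nat (mKL m K {?s}) * e {?s} g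
      + of_nat (mKL m K {?t}) * e {?t} g + of_nat (mKL m K (dihS m)) * e (dihS m) g"
    if "K \<subseteq> dihS m" for K
  proof -
    have "xJ m K g = (\<Sum>L\<in>Pow (dihS m). of_nat (mKL m K L) * e L g)"
      using x_eq that by blast
    then show ?thesis unfolding S sum_Pow_doubleton[OF st] .
  qed
  show ?thesis
  proof (rule rank2_system_solution)
    show "xJ m {} g = of_nat (2 * m) * e {} g"
      using xJ_expand[of "{}"] by (simp add: mKL_empty S)
    show "xJ m {?s} g = of_nat (card (XJ m {?s})) * e {} g + 2 * e {?s} g"
      using xJ_expand[of "{?s}"] st
      by (simp add: S mKL_singleton_empty mKL_singleton_self[OF m] mKL_eq_0_if_not_subset)
    show "xJ m {?t} g = of_nat (card (XJ m {?t})) * e {} g + 2 * e {?t} g"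
      using xJ_expand[of "{?t}"] st
      by (simp add: S mKL_singleton_empty mKL_singleton_self[OF m] mKL_eq_0_if_not_subset)
    show "xJ m (dihS m) g = e {} g + e {?s} g + e {?t} g + e (dihS m) g"
      using xJ_expand[of "dihS m"] mKL_dihS[OF m, of "{}"] mKL_dihS[OF m, of "{?s}"]
        mKL_dihS[OF m, of "{?t}"] mKL_dihS[OF m, of "dihS m"]
      by (simp add: S)
  qed (use card_XJ_gen_s_plus_card_XJ_gen_t[OF m] m in simp_all)
qed

lemma xJ_combination_eq_Av_diff:
  assumes m: "2 \<le> m"
  shows "xJ m (dihS m) g - (xJ m {gen_s} g + xJ m {gen_t m} g) / 2
      + (of_nat m - 1) * xJ m {} g / (2 * of_nat m) =
    Av (cyc m (w0 m)) g - Av (dih_carrier m) g"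
  using longest_elt_in_carrier[OF m] longest_elt_neq_one[OF m] dih_one_in_carrier[of m] m
  by (cases "g \<in> dih_carrier m"; cases "g = dih_one"; cases "g = longest_elt m")
    (simp_all add: xJ_dihS xJ_gen_s_plus_xJ_gen_t xJ_empty cyc_w0 Av_eq finite_dih_carrier
      card_dih_carrier field_simps)

theorem lemma5p4:
  fixes m :: nat and e :: "dih set \<Rightarrow> dih \<Rightarrow> complex"
  assumes "m \<ge> 2"
    and "\<forall>K. K \<subseteq> dihS m \<longrightarrow>
           (\<forall>g. xJ m K g = (\<Sum>L\<in>Pow (dihS m). of_nat (mKL m K L) * e L g))"
  shows "\<forall>g. e (dihS m) g = Av (cyc m (w0 m)) g - Av (dih_carrier m) g"
  using e_dihS_eq_xJ_combination[OF assms] xJ_combination_eq_Av_diff[OF assms(1)] by simp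

end
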